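(* Let $K$ be a simplicial complex and $W\subset K$ a subcomplex. Let $$Z:=\{\tau\in K:\ \tau\cup\sigma\notin K\text{ for all }\sigma\in K\setminus W\}.$$ Then $O_K(Z)=Z$ and $Z=W\setminus\overline{K\setminus W}$.
   Context: A simplicial complex $K$ on a vertex set $S$ is a collection of subsets of $S$ (faces) closed under taking subsets (including $\varnothing$). For a subset $Z\subset K$, the closure $\overline Z$ is the smallest subcomplex of $K$ containing $Z$ (all subsets of elements of $Z$), and the open neighborhood is $O_K(Z)=\{\sigma\in K:\ \sigma\supseteq\tau\text{ for some }\tau\in Z\}$. *)

theory Defs
  imports Main
begin

definition simplicial_complex :: "'a set \<Rightarrow> 'a set set \<Rightarrow> bool" where
  "simplicial_complex S K \<longleftrightarrow> K \<subseteq> Pow S \<and> {} \<in> K \<and> (\<forall>\<sigma>\<in>K. \<forall>\<tau>. \<tau> \<subseteq> \<sigma> \<longrightarrow> \<tau> \<in> K)"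

definition subcomplex :: "'a set \<Rightarrow> 'a set set \<Rightarrow> 'a set set \<Rightarrow> bool" where
  "subcomplex S K W \<longleftrightarrow> W \<subseteq> K \<and> simplicial_complex S W"

definition cl :: "'a set set \<Rightarrow> 'a set set" where
  "cl Z = {\<rho>. \<exists>\<tau>\<in>Z. \<rho> \<subseteq> \<tau>}"

definition open_nbhd :: "'a set set \<Rightarrow> 'a set set \<Rightarrow> 'a set set" where
  "open_nbhd K Z = {\<sigma>\<in>K. \<exists>\<tau>\<in>Z. \<tau> \<subseteq> \<sigma>}"

end

theory Submission
  imports Defs
begin

text \<open>A face \<tau> of K fails to lie in
  W - cl (K - W) exactly when some \<sigma> \<in> K - W contains it, and then
  \<tau> \<union> \<sigma> = \<sigma> \<in> K; conversely, if \<tau> \<union> \<sigma> \<in> K with \<sigma> \<notin> W, then \<tau> \<union> \<sigma> \<notin> W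
  is a face of K - W containing \<tau>. Upward closure of Z in K holds because
  \<tau> \<subseteq> \<tau>' forces \<tau> \<union> \<sigma> \<subseteq> \<tau>' \<union> \<sigma>.\<close>

definition down_closed :: "'a set set \<Rightarrow> bool" where
  "down_closed K \<longleftrightarrow> (\<forall>\<sigma>\<in>K. \<forall>\<tau>. \<tau> \<subseteq> \<sigma> \<longrightarrow> \<tau> \<in> K)"

lemma down_closedD: "down_closed K \<Longrightarrow> \<sigma> \<in> K \<Longrightarrow> \<tau> \<subseteq> \<sigma> \<Longrightarrow> \<tau> \<in> K"
  unfolding down_closed_def by blast

lemma simplicial_complex_down_closed: "simplicial_complex S K \<Longrightarrow> down_closed K"
  unfolding simplicial_complex_def down_closed_def by blast

lemma open_nbhd_non_joinable_faces:
  assumes "down_closed K"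
  shows "open_nbhd K {\<tau>\<in>K. \<forall>\<sigma>\<in>L. \<tau> \<union> \<sigma> \<notin> K} = {\<tau>\<in>K. \<forall>\<sigma>\<in>L. \<tau> \<union> \<sigma> \<notin> K}"
    (is "open_nbhd K ?Z = ?Z")
proof
  show "open_nbhd K ?Z \<subseteq> ?Z"
  proof
    fix \<tau>' assume "\<tau>' \<in> open_nbhd K ?Z"
    then obtain \<tau> where "\<tau>' \<in> K" "\<tau> \<in> ?Z" "\<tau> \<subseteq> \<tau>'"
      unfolding open_nbhd_def by blast
    moreover have "\<tau> \<union> \<sigma> \<in> K" if "\<tau>' \<union> \<sigma> \<in> K" for \<sigma>
      using down_closedD[OF assms that] \<open>\<tau> \<subseteq> \<tau>'\<close> by blast
    ultimately show "\<tau>' \<in> ?Z" by blast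
  qed
qed (auto simp: open_nbhd_def)

lemma non_joinable_faces_eq_diff_cl:
  assumes "down_closed K" "down_closed W" "W \<subseteq> K"
  shows "{\<tau>\<in>K. \<forall>\<sigma>\<in>K - W. \<tau> \<union> \<sigma> \<notin> K} = W - cl (K - W)"
proof
  show "{\<tau>\<in>K. \<forall>\<sigma>\<in>K - W. \<tau> \<union> \<sigma> \<notin> K} \<subseteq> W - cl (K - W)"
  proof
    fix \<tau> assume \<tau>: "\<tau> \<in> {\<tau>\<in>K. \<forall>\<sigma>\<in>K - W. \<tau> \<union> \<sigma> \<notin> K}"
    have "\<not> \<tau> \<subseteq> \<sigma>" if "\<sigma> \<in> K - W" for \<sigma>
    proof
      assume "\<tau> \<subseteq> \<sigma>"
      then have "\<tau> \<union> \<sigma> = \<sigma>" by blast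
      moreover have "\<tau> \<union> \<sigma> \<notin> K" using \<tau> that by blast
      ultimately show False using that by simp
    qed
    moreover have "\<tau> \<in> K" using \<tau> by simp
    ultimately show "\<tau> \<in> W - cl (K - W)"
      unfolding cl_def by blast
  qed
  show "W - cl (K - W) \<subseteq> {\<tau>\<in>K. \<forall>\<sigma>\<in>K - W. \<tau> \<union> \<sigma> \<notin> K}"
  proof
    fix \<tau> assume \<tau>: "\<tau> \<in> W - cl (K - W)"
    have "\<tau> \<union> \<sigma> \<notin> K" if "\<sigma> \<in> K - W" for \<sigma>
    proof
      assume "\<tau> \<union> \<sigma> \<in> K"
      moreover have "\<tau> \<union> \<sigma> \<notin> W" using down_closedD[OF assms(2)] that by blast
      ultimately have "\<tau> \<in> cl (K - W)" unfolding cl_def by blast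
      with \<tau> show False by blast
    qed
    with \<tau> assms(3) show "\<tau> \<in> {\<tau>\<in>K. \<forall>\<sigma>\<in>K - W. \<tau> \<union> \<sigma> \<notin> K}" by blast
  qed
qed

theorem lemma3p4:
  fixes S :: "'a set" and K W :: "'a set set"
  assumes "simplicial_complex S K"
    and "subcomplex S K W"
  defines "Z \<equiv> {\<tau>\<in>K. \<forall>\<sigma>\<in>K - W. \<tau> \<union> \<sigma> \<notin> K}"
  shows "open_nbhd K Z = Z \<and> Z = W - cl (K - W)"
proof -
  have K: "down_closed K" using assms(1) by (rule simplicial_complex_down_closed)
  have "W \<subseteq> K" using assms(2) unfolding subcomplex_def by simp
  have W: "down_closed W"
    using assms(2) unfolding subcomplex_def by (blast intro: simplicial_complex_down_closed)
  show ?thesis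
    unfolding Z_def
    using open_nbhd_non_joinable_faces[OF K] non_joinable_faces_eq_diff_cl[OF K W \<open>W \<subseteq> K\<close>]
    by (intro conjI)
qed

end
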